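(* The optimal value function $J^*$ defined in the context is $L_1$-Lipschitz continuous on $\mathcal X$, with $L_1=\frac{\beta+\bar\rho}{4(1-\gamma\bar a)}\Big(1+\frac{2\gamma}{1-\gamma}\Big)$.
   Context: Patient model: $M$ treatments; $\mathcal U:=\{v\in\{0,1\}^M:\|v\|_0\leq1\}$. Dynamics $f(x,u,d,w)=ax+b^\top u+c^\top d+w$ with adherence $d^i\mid x,u^i\sim\mathrm{Bernoulli}(u^i\sigma(x+\mu_i))$, $\sigma$ the sigmoid; true parameters satisfy $a\in[0,\bar a]$ (known $\bar a\in(0,1)$), $\|b\|_\infty\leq\bar b$, $\|c\|_\infty\leq\bar c$, $\mu\in[-\bar\mu,\bar\mu]^M$. Noise i.i.d., zero-symmetric, $\sigma_s^2$-subgaussian, $|w|\leq\bar w$ ($\bar w>0$), log-concave density, known variance. $C_x:=\frac{\bar b+\bar c+\bar w}{1-\bar a}$, $\mathcal X:=[-C_x,C_x]$. Reward $r(x,u,d)=-\beta\sigma(\beta_0-x)+\sum_i\rho_id_i$ with known $\rho_i\in[0,\bar\rho]$, $\beta\geq0$, $\beta_0\in\mathbb R$; discount $\gamma\in(0,1)$. $J^*$ is the unique bounded fixed point on $\mathcal X$ of $\mathcal TJ(x)=\max_{u\in\mathcal U}\mathbf E[r(x,u,d)+\gamma J(f(x,u,d,w))]$, expectation over $d$ and $w$ under the true parameters (the optimal infinite-horizon discounted value function). *)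

theory Defs
  imports "HOL-Probability.Probability"
begin

definition sigmoid :: "real \<Rightarrow> real" where
  "sigmoid t = 1 / (1 + exp (- t))"

text \<open>Action set U = {v in {0,1}^M : ||v||_0 <= 1}; vectors in R^M are functions
  nat => real supported on {..<M}.\<close>
definition actions :: "nat \<Rightarrow> (nat \<Rightarrow> real) set" where
  "actions M = {u. (\<forall>i<M. u i \<in> {0, 1}) \<and> (\<forall>i. M \<le> i \<longrightarrow> u i = 0)
                  \<and> card {i. i < M \<and> u i \<noteq> 0} \<le> 1}"

text \<open>Distribution of the adherence vector d given x and u: components independent,
  d_i ~ Bernoulli(u_i * sigmoid(x + mu_i)); d_i = True encodes d_i = 1.\<close>
definition adherence :: "nat \<Rightarrow> (nat \<Rightarrow> real) \<Rightarrow> real \<Rightarrow> (nat \<Rightarrow> real) \<Rightarrow> (nat \<Rightarrow> bool) pmf" where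
  "adherence M \<mu> x u = Pi_pmf {..<M} False (\<lambda>i. bernoulli_pmf (u i * sigmoid (x + \<mu> i)))"

definition dyn :: "nat \<Rightarrow> real \<Rightarrow> (nat \<Rightarrow> real) \<Rightarrow> (nat \<Rightarrow> real) \<Rightarrow> real \<Rightarrow> (nat \<Rightarrow> real)
                   \<Rightarrow> (nat \<Rightarrow> bool) \<Rightarrow> real \<Rightarrow> real" where
  "dyn M a b c x u d w = a * x + (\<Sum>i<M. b i * u i) + (\<Sum>i<M. c i * of_bool (d i)) + w"

definition reward :: "nat \<Rightarrow> real \<Rightarrow> real \<Rightarrow> (nat \<Rightarrow> real) \<Rightarrow> real \<Rightarrow> (nat \<Rightarrow> bool) \<Rightarrow> real" where
  "reward M \<beta> \<beta>0 \<rho> x d = - \<beta> * sigmoid (\<beta>0 - x) + (\<Sum>i<M. \<rho> i * of_bool (d i))"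

text \<open>Bellman operator; the noise w has Lebesgue density g, so E_w[h(w)] = LINT w. g w * h w.\<close>
definition bellman ::
  "nat \<Rightarrow> real \<Rightarrow> (nat \<Rightarrow> real) \<Rightarrow> (nat \<Rightarrow> real) \<Rightarrow> (nat \<Rightarrow> real) \<Rightarrow> (real \<Rightarrow> real)
   \<Rightarrow> real \<Rightarrow> real \<Rightarrow> (nat \<Rightarrow> real) \<Rightarrow> real \<Rightarrow> (real \<Rightarrow> real) \<Rightarrow> real \<Rightarrow> real" where
  "bellman M a b c \<mu> g \<beta> \<beta>0 \<rho> \<gamma> J x =
     Max ((\<lambda>u. measure_pmf.expectation (adherence M \<mu> x u)
                 (\<lambda>d. reward M \<beta> \<beta>0 \<rho> x d
                      + \<gamma> * (LINT w|lborel. g w * J (dyn M a b c x u d w)))) ` actions M)"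

definition log_concave :: "(real \<Rightarrow> real) \<Rightarrow> bool" where
  "log_concave g \<longleftrightarrow> (\<forall>x y t. 0 \<le> t \<longrightarrow> t \<le> 1 \<longrightarrow>
       g x powr t * g y powr (1 - t) \<le> g (t * x + (1 - t) * y))"

end

theory Submission
  imports Defs
begin

(* Let B be the supremum of |J| on X = [-C_x, C_x]; the fixed-point equation gives
   B <= beta + rho_bar + gamma B. For an action that may activate treatment i, the Q-value at x is
   the reward -beta sigma(beta0 - x) + p(x) rho_i plus gamma times the mixture, with weight
   p(x) = u_i sigma(x + mu_i), of the noise averages of J at a x + b_i u_i + c_i and a x + b_i u_i,
   and X is invariant under the dynamics. As sigma is 1/4-Lipschitz, replacing x by y changes the
   reward by at most (beta + rho_bar)|x - y|/4, the weight by at most |x - y|/4 (which costs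
   gamma |x - y|/4 * 2B <= gamma |x - y| (beta + rho_bar)/(2(1 - gamma))), and the arguments of J
   by a|x - y|. Hence if |J x - J y| <= L_1 |x - y| + E on X, the same holds with slack gamma E,
   because L_1 solves L = (beta + rho_bar)/4 + gamma abar L + gamma (beta + rho_bar)/(2(1 - gamma)).
   Starting from E = 2B and iterating gives the claim. *)

lemma sigmoid_pos: "0 < sigmoid t"
  by (simp add: sigmoid_def add_pos_pos)

lemma sigmoid_less_1: "sigmoid t < 1"
  unfolding sigmoid_def by (simp add: add_pos_pos)

lemma has_real_derivative_sigmoid:
  "(sigmoid has_real_derivative sigmoid t * (1 - sigmoid t)) (at t)"
proof -
  have "1 + exp (- t) \<noteq> 0"
    using exp_gt_zero[of "- t"] by linarith
  then have "((\<lambda>t. 1 / (1 + exp (- t))) has_real_derivative exp (- t) / (1 + exp (- t))\<^sup>2) (at t)"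
    by (auto intro!: derivative_eq_intros simp: power2_eq_square)
  moreover have "exp (- t) / (1 + exp (- t))\<^sup>2 = sigmoid t * (1 - sigmoid t)"
    using \<open>1 + exp (- t) \<noteq> 0\<close> by (simp add: sigmoid_def field_simps power2_eq_square)
  ultimately show ?thesis
    by (simp add: sigmoid_def[abs_def])
qed

lemma sigmoid_lipschitz: "\<bar>sigmoid s - sigmoid t\<bar> \<le> \<bar>s - t\<bar> / 4"
proof -
  have "\<bar>sigmoid z * (1 - sigmoid z)\<bar> \<le> 1 / 4" for z
    using sigmoid_pos[of z] sigmoid_less_1[of z] sum_squares_ge_zero[of "sigmoid z - 1/2" 0]
    by (simp add: power2_eq_square algebra_simps)
  then have "norm (sigmoid s - sigmoid t) \<le> 1 / 4 * norm (s - t)"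
    by (intro field_differentiable_bound[of UNIV _ "\<lambda>t. sigmoid t * (1 - sigmoid t)"])
       (auto intro: has_field_derivative_at_within has_real_derivative_sigmoid)
  then show ?thesis
    by simp
qed

lemma abs_scaled_sigmoid_diff_le:
  assumes "0 \<le> c"
  shows "\<bar>c * sigmoid s - c * sigmoid t\<bar> \<le> c * (\<bar>s - t\<bar> / 4)"
  unfolding right_diff_distrib[symmetric] abs_mult abs_of_nonneg[OF assms]
  by (rule mult_left_mono[OF sigmoid_lipschitz assms])

lemma bernoulli_pmf_0: "bernoulli_pmf 0 = return_pmf False"
  by (rule pmf_eqI) (simp add: indicator_def)

lemma finite_actions: "finite (actions M)"
proof (rule finite_subset)
  show "actions M \<subseteq> (\<lambda>S j. of_bool (j \<in> S)) ` Pow {..<M}"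
  proof
    fix u assume u: "u \<in> actions M"
    have "u j = of_bool (j \<in> {j. j < M \<and> u j = 1})" for j
      using u unfolding actions_def by (cases "j < M") auto
    then have "u = (\<lambda>j. of_bool (j \<in> {j. j < M \<and> u j = 1}))" ..
    then show "u \<in> (\<lambda>S j. of_bool (j \<in> S)) ` Pow {..<M}"
      by blast
  qed
qed simp

lemma zero_in_actions: "(\<lambda>_. 0) \<in> actions M"
  by (simp add: actions_def)

lemma actions_single_support:
  assumes "u \<in> actions M" "0 < M"
  obtains i where "i < M" "u i \<in> {0, 1}" "\<And>j. j \<noteq> i \<Longrightarrow> u j = 0"
proof -
  let ?S = "{i. i < M \<and> u i \<noteq> 0}"
  have "card ?S \<le> Suc 0"
    using assms(1) by (simp add: actions_def)
  then have unique: "\<forall>i\<in>?S. \<forall>j\<in>?S. i = j"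
    by (simp add: card_le_Suc0_iff_eq)
  show thesis
  proof (cases "?S = {}")
    case True
    have "u j = 0" for j
      using assms(1) True unfolding actions_def by (cases "j < M") auto
    then show thesis
      using assms(2) by (intro that[of 0]) auto
  next
    case False
    then obtain i where i: "i < M" "u i \<noteq> 0"
      by blast
    have "u j = 0" if "j \<noteq> i" for j
      using assms(1) unique i that unfolding actions_def by (cases "j < M") auto
    moreover have "u i \<in> {0, 1}"
      using assms(1) i(1) by (simp add: actions_def)
    ultimately show thesis
      using i(1) that by blast
  qed
qed

lemma adherence_single_support:
  assumes "i < M" "\<And>j. j \<noteq> i \<Longrightarrow> u j = 0"
  shows "adherence M \<mu> x u =
           map_pmf (\<lambda>t j. if j = i then t else False) (bernoulli_pmf (u i * sigmoid (x + \<mu> i)))"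
proof -
  have "adherence M \<mu> x u =
          Pi_pmf {..<M} False (\<lambda>j. if j = i then bernoulli_pmf (u i * sigmoid (x + \<mu> i))
                                   else return_pmf False)"
    unfolding adherence_def using assms(2) by (intro Pi_pmf_cong) (auto simp: bernoulli_pmf_0)
  also have "\<dots> = Pi_pmf {i} False (\<lambda>_. bernoulli_pmf (u i * sigmoid (x + \<mu> i)))"
    using assms(1) by (subst Pi_pmf_if_set) (auto intro: Pi_pmf_cong)
  finally show ?thesis
    by (simp add: Pi_pmf_singleton)
qed

definition noise_average :: "(real \<Rightarrow> real) \<Rightarrow> (real \<Rightarrow> real) \<Rightarrow> real \<Rightarrow> real" where
  "noise_average g J z = (LINT w|lborel. g w * J (z + w))"

definition q_value ::
  "nat \<Rightarrow> real \<Rightarrow> (nat \<Rightarrow> real) \<Rightarrow> (nat \<Rightarrow> real) \<Rightarrow> (nat \<Rightarrow> real) \<Rightarrow> (real \<Rightarrow> real)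
   \<Rightarrow> real \<Rightarrow> real \<Rightarrow> (nat \<Rightarrow> real) \<Rightarrow> real \<Rightarrow> (real \<Rightarrow> real) \<Rightarrow> real \<Rightarrow> (nat \<Rightarrow> real) \<Rightarrow> real" where
  "q_value M a b c \<mu> g \<beta> \<beta>0 \<rho> \<gamma> J x u =
     measure_pmf.expectation (adherence M \<mu> x u)
       (\<lambda>d. reward M \<beta> \<beta>0 \<rho> x d + \<gamma> * (LINT w|lborel. g w * J (dyn M a b c x u d w)))"

lemma bellman_eq_Max_q_value:
  "bellman M a b c \<mu> g \<beta> \<beta>0 \<rho> \<gamma> J x = Max (q_value M a b c \<mu> g \<beta> \<beta>0 \<rho> \<gamma> J x ` actions M)"
  by (simp add: bellman_def q_value_def)

lemma q_value_single_support:
  fixes x :: real and \<mu> :: "nat \<Rightarrow> real"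
  assumes "i < M" "\<And>j. j \<noteq> i \<Longrightarrow> u j = 0" "u i \<in> {0, 1}"
  defines "p \<equiv> u i * sigmoid (x + \<mu> i)"
  shows "q_value M a b c \<mu> g \<beta> \<beta>0 \<rho> \<gamma> J x u =
           - \<beta> * sigmoid (\<beta>0 - x) + p * \<rho> i
           + \<gamma> * (p * noise_average g J (a * x + b i * u i + c i)
                  + (1 - p) * noise_average g J (a * x + b i * u i))"
proof -
  let ?d = "\<lambda>t j. if j = i then t else False"
  have p: "0 \<le> p" "p \<le> 1"
    using assms(3) sigmoid_pos[of "x + \<mu> i"] sigmoid_less_1[of "x + \<mu> i"] by (auto simp: p_def)
  have single: "(\<Sum>j<M. f j * (if j = i then s else 0)) = f i * s" for f :: "nat \<Rightarrow> real" and s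
    using assms(1) by (simp add: if_distrib[of "(*) _"] cong: if_cong)
  have "(\<lambda>j. of_bool (?d t j) :: real) = (\<lambda>j. if j = i then of_bool t else 0)" for t
    by auto
  then have sum_d: "(\<Sum>j<M. f j * of_bool (?d t j)) = f i * of_bool t" for f :: "nat \<Rightarrow> real" and t
    using single[of f "of_bool t"] by metis
  have "u = (\<lambda>j. if j = i then u i else 0)"
    using assms(2) by auto
  then have "(\<Sum>j<M. b j * u j) = b i * u i"
    using single[of b "u i"] by metis
  then have dyn_d: "dyn M a b c x u (?d t) w = a * x + b i * u i + c i * of_bool t + w" for t w
    by (simp add: dyn_def sum_d)
  have reward_d: "reward M \<beta> \<beta>0 \<rho> x (?d t) = - \<beta> * sigmoid (\<beta>0 - x) + \<rho> i * of_bool t" for t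
    by (simp add: reward_def sum_d)
  let ?F = "\<lambda>t. reward M \<beta> \<beta>0 \<rho> x (?d t) + \<gamma> * (LINT w|lborel. g w * J (dyn M a b c x u (?d t) w))"
  have adh: "adherence M \<mu> x u = map_pmf ?d (bernoulli_pmf p)"
    unfolding p_def by (rule adherence_single_support[of i M u, OF assms(1,2)])
  have "q_value M a b c \<mu> g \<beta> \<beta>0 \<rho> \<gamma> J x u = measure_pmf.expectation (bernoulli_pmf p) ?F"
    unfolding q_value_def adh by (rule integral_map_pmf)
  also have "\<dots> = ?F True * p + ?F False * (1 - p)"
    by (rule integral_bernoulli_pmf[OF p])
  also have "\<dots> = - \<beta> * sigmoid (\<beta>0 - x) + p * \<rho> i
           + \<gamma> * (p * noise_average g J (a * x + b i * u i + c i)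
                  + (1 - p) * noise_average g J (a * x + b i * u i))"
    unfolding dyn_d reward_d noise_average_def by (simp add: algebra_simps)
  finally show ?thesis .
qed

lemma density_mult_bounded:
  fixes g \<phi> :: "'a \<Rightarrow> real"
  assumes g: "has_bochner_integral M g 1" "\<And>w. 0 \<le> g w" "\<And>w. w \<notin> S \<Longrightarrow> g w = 0"
    and \<phi>: "\<phi> \<in> borel_measurable M" "\<And>w. w \<in> S \<Longrightarrow> \<bar>\<phi> w\<bar> \<le> K"
  shows "integrable M (\<lambda>w. g w * \<phi> w)" and "\<bar>\<integral>w. g w * \<phi> w \<partial>M\<bar> \<le> K"
proof -
  have int_g: "integrable M g" and "(\<integral>w. g w \<partial>M) = 1"
    using g(1) by (simp_all add: has_bochner_integral_iff)
  have bound: "\<bar>g w * \<phi> w\<bar> \<le> K * g w" for w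
    using g(2,3)[of w] \<phi>(2)[of w]
    by (cases "w \<in> S") (auto simp: abs_mult mult.commute[of K] intro: mult_left_mono)
  show int: "integrable M (\<lambda>w. g w * \<phi> w)"
  proof (rule Bochner_Integration.integrable_bound)
    show "integrable M (\<lambda>w. K * g w)"
      using int_g by simp
    show "(\<lambda>w. g w * \<phi> w) \<in> borel_measurable M"
      using borel_measurable_integrable[OF int_g] \<phi>(1) by simp
    show "AE w in M. norm (g w * \<phi> w) \<le> norm (K * g w)"
      by (intro AE_I2) (simp add: order_trans[OF bound abs_ge_self])
  qed
  have "\<bar>\<integral>w. g w * \<phi> w \<partial>M\<bar> \<le> (\<integral>w. \<bar>g w * \<phi> w\<bar> \<partial>M)"
    using integral_norm_bound[of M "\<lambda>w. g w * \<phi> w"] by simp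
  also have "\<dots> \<le> (\<integral>w. K * g w \<partial>M)"
    using int int_g bound by (intro integral_mono) auto
  also have "\<dots> = K"
    using \<open>(\<integral>w. g w \<partial>M) = 1\<close> by simp
  finally show "\<bar>\<integral>w. g w * \<phi> w \<partial>M\<bar> \<le> K" .
qed

lemma abs_Max_image_diff_le:
  fixes f h :: "'a \<Rightarrow> real"
  assumes "finite U" "U \<noteq> {}" "\<And>u. u \<in> U \<Longrightarrow> \<bar>f u - h u\<bar> \<le> K"
  shows "\<bar>Max (f ` U) - Max (h ` U)\<bar> \<le> K"
proof -
  have "f u \<le> Max (h ` U) + K" and "h u \<le> Max (f ` U) + K" if "u \<in> U" for u
    using assms(3)[OF that] Max_ge[OF finite_imageI[OF assms(1)], of "h u"]
      Max_ge[OF finite_imageI[OF assms(1)], of "f u"] that by force+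
  then have "Max (f ` U) \<le> Max (h ` U) + K" and "Max (h ` U) \<le> Max (f ` U) + K"
    using assms(1,2) by simp_all
  then show ?thesis
    by linarith
qed

lemma abs_Max_image_le:
  fixes f :: "'a \<Rightarrow> real"
  assumes "finite U" "U \<noteq> {}" "\<And>u. u \<in> U \<Longrightarrow> \<bar>f u\<bar> \<le> K"
  shows "\<bar>Max (f ` U)\<bar> \<le> K"
  using abs_Max_image_diff_le[of U f "\<lambda>_. 0" K] assms by simp

lemma abs_convex_comb_le:
  fixes p h1 h0 B :: real
  assumes "0 \<le> p" "p \<le> 1" "\<bar>h1\<bar> \<le> B" "\<bar>h0\<bar> \<le> B"
  shows "\<bar>p * h1 + (1 - p) * h0\<bar> \<le> B"
proof -
  have "\<bar>p * h1 + (1 - p) * h0\<bar> \<le> p * \<bar>h1\<bar> + (1 - p) * \<bar>h0\<bar>"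
    using assms(1,2) abs_triangle_ineq[of "p * h1" "(1 - p) * h0"] by (simp add: abs_mult)
  also have "\<dots> \<le> p * B + (1 - p) * B"
    using assms by (intro add_mono mult_left_mono) auto
  finally show ?thesis
    by (simp add: algebra_simps)
qed

lemma convex_comb_diff_le:
  fixes p q h1 h0 k1 k0 W :: real
  assumes "0 \<le> p" "p \<le> 1" "\<bar>h1 - k1\<bar> \<le> W" "\<bar>h0 - k0\<bar> \<le> W"
  shows "\<bar>(p * h1 + (1 - p) * h0) - (q * k1 + (1 - q) * k0)\<bar> \<le> W + \<bar>p - q\<bar> * \<bar>k1 - k0\<bar>"
proof -
  have "(p * h1 + (1 - p) * h0) - (q * k1 + (1 - q) * k0)
          = (p * (h1 - k1) + (1 - p) * (h0 - k0)) + (p - q) * (k1 - k0)"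
    by (simp add: algebra_simps)
  moreover have "\<bar>p * (h1 - k1) + (1 - p) * (h0 - k0)\<bar> \<le> W"
    using abs_convex_comb_le assms by blast
  ultimately show ?thesis
    using abs_triangle_ineq[of "p * (h1 - k1) + (1 - p) * (h0 - k0)" "(p - q) * (k1 - k0)"]
    by (simp add: abs_mult)
qed

text \<open>Any \<open>C\<close> with \<open>abar * C + bbar + cbar + wbar \<le> C\<close> makes \<open>{-C..C}\<close> invariant under the
  dynamics; the theorem uses the least one, \<open>C = (bbar + cbar + wbar) / (1 - abar)\<close>.\<close>

locale bounded_bellman_fixpoint =
  fixes M :: nat and a abar bbar cbar wbar \<rho>bar \<beta> \<beta>0 \<gamma> C :: real
    and b c \<mu> \<rho> :: "nat \<Rightarrow> real" and g J :: "real \<Rightarrow> real"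
  assumes M_pos: "0 < M"
    and a_nonneg: "0 \<le> a" and a_le_abar: "a \<le> abar" and abar_less_1: "abar < 1"
    and b_bound: "\<And>i. i < M \<Longrightarrow> \<bar>b i\<bar> \<le> bbar"
    and c_bound: "\<And>i. i < M \<Longrightarrow> \<bar>c i\<bar> \<le> cbar"
    and rho_bounds: "\<And>i. i < M \<Longrightarrow> 0 \<le> \<rho> i \<and> \<rho> i \<le> \<rho>bar"
    and beta_nonneg: "0 \<le> \<beta>"
    and gamma_nonneg: "0 \<le> \<gamma>" and gamma_less_1: "\<gamma> < 1"
    and wbar_nonneg: "0 \<le> wbar"
    and g_density: "has_bochner_integral lborel g 1"
    and g_nonneg: "\<And>w. 0 \<le> g w"
    and g_support: "\<And>w. wbar < \<bar>w\<bar> \<Longrightarrow> g w = 0"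
    and states_invariant: "abar * C + bbar + cbar + wbar \<le> C"
    and J_measurable: "J \<in> borel_measurable borel"
    and J_bounded: "bounded (J ` {-C..C})"
    and J_fixpoint: "\<And>x. x \<in> {-C..C} \<Longrightarrow> J x = bellman M a b c \<mu> g \<beta> \<beta>0 \<rho> \<gamma> J x"
begin

abbreviation Q :: "real \<Rightarrow> (nat \<Rightarrow> real) \<Rightarrow> real" where
  "Q \<equiv> q_value M a b c \<mu> g \<beta> \<beta>0 \<rho> \<gamma> J"

definition sup_norm :: real where
  "sup_norm = (SUP x\<in>{-C..C}. \<bar>J x\<bar>)"

definition lipschitz_const :: real where
  "lipschitz_const = (\<beta> + \<rho>bar) / (4 * (1 - \<gamma> * abar)) * (1 + 2 * \<gamma> / (1 - \<gamma>))"

definition lipschitz_up_to :: "real \<Rightarrow> bool" where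
  "lipschitz_up_to E \<longleftrightarrow>
     (\<forall>x\<in>{-C..C}. \<forall>y\<in>{-C..C}. \<bar>J x - J y\<bar> \<le> lipschitz_const * \<bar>x - y\<bar> + E)"

lemma bbar_nonneg: "0 \<le> bbar" and cbar_nonneg: "0 \<le> cbar" and rhobar_nonneg: "0 \<le> \<rho>bar"
  using b_bound[OF M_pos] c_bound[OF M_pos] rho_bounds[OF M_pos] by auto

lemma C_nonneg: "0 \<le> C"
proof -
  have "0 \<le> (1 - abar) * C"
    using states_invariant bbar_nonneg cbar_nonneg wbar_nonneg by (simp add: algebra_simps)
  then show ?thesis
    using abar_less_1 by (simp add: zero_le_mult_iff)
qed

lemma successor_in_states:
  assumes "x \<in> {-C..C}" "\<bar>s\<bar> \<le> bbar + cbar" "\<bar>w\<bar> \<le> wbar"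
  shows "a * x + s + w \<in> {-C..C}"
proof -
  have "\<bar>a * x\<bar> \<le> abar * C"
    using assms(1) a_nonneg a_le_abar C_nonneg by (auto simp: abs_mult intro: mult_mono)
  then have "\<bar>a * x + s + w\<bar> \<le> C"
    using assms(2,3) states_invariant by linarith
  then show ?thesis
    by (simp add: abs_le_iff)
qed

lemma abs_J_le_sup_norm:
  assumes "x \<in> {-C..C}"
  shows "\<bar>J x\<bar> \<le> sup_norm"
proof -
  have "bdd_above ((\<lambda>x. \<bar>J x\<bar>) ` {-C..C})"
    using J_bounded unfolding bdd_above_norm[symmetric] by (simp add: image_image)
  with assms show ?thesis
    unfolding sup_norm_def by (rule cSUP_upper)
qed

lemma noise_integral_bounded:
  assumes "\<phi> \<in> borel_measurable borel" "\<And>w. \<bar>w\<bar> \<le> wbar \<Longrightarrow> \<bar>\<phi> w\<bar> \<le> K"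
  shows "integrable lborel (\<lambda>w. g w * \<phi> w)" and "\<bar>LINT w|lborel. g w * \<phi> w\<bar> \<le> K"
  using density_mult_bounded[OF g_density g_nonneg _ _ assms(2), of "{w. \<bar>w\<bar> \<le> wbar}"] assms(1)
    g_support by auto

lemma J_shift_measurable: "(\<lambda>w. J (z + w)) \<in> borel_measurable borel"
  using J_measurable by measurable

lemma abs_noise_average_le:
  assumes "x \<in> {-C..C}" "\<bar>s\<bar> \<le> bbar + cbar"
  shows "\<bar>noise_average g J (a * x + s)\<bar> \<le> sup_norm"
  unfolding noise_average_def
  using assms by (intro noise_integral_bounded J_shift_measurable abs_J_le_sup_norm successor_in_states)

lemma noise_average_diff_le:
  assumes "x \<in> {-C..C}" "y \<in> {-C..C}" "\<bar>s\<bar> \<le> bbar + cbar"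
    and "\<And>w. \<bar>w\<bar> \<le> wbar \<Longrightarrow> \<bar>J (a * x + s + w) - J (a * y + s + w)\<bar> \<le> K"
  shows "\<bar>noise_average g J (a * x + s) - noise_average g J (a * y + s)\<bar> \<le> K"
proof -
  have integrable: "integrable lborel (\<lambda>w. g w * J (a * z + s + w))" if "z \<in> {-C..C}" for z
    using that assms(3)
    by (intro noise_integral_bounded(1)[of _ sup_norm] J_shift_measurable abs_J_le_sup_norm
        successor_in_states)
  have "noise_average g J (a * x + s) - noise_average g J (a * y + s)
          = (LINT w|lborel. g w * (J (a * x + s + w) - J (a * y + s + w)))"
    using integrable[OF assms(1)] integrable[OF assms(2)]
    by (simp add: noise_average_def right_diff_distrib add.assoc)
  also have "\<bar>\<dots>\<bar> \<le> K"
    using assms(4) by (intro noise_integral_bounded(2)) (auto intro: borel_measurable_diff J_shift_measurable)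
  finally show ?thesis .
qed

definition noise_mixture :: "(real \<Rightarrow> real) \<Rightarrow> real \<Rightarrow> real \<Rightarrow> real \<Rightarrow> real" where
  "noise_mixture p s1 s0 x =
     p x * noise_average g J (a * x + s1) + (1 - p x) * noise_average g J (a * x + s0)"

lemma q_value_decomposition:
  assumes "u \<in> actions M"
  obtains p :: "real \<Rightarrow> real" and r s1 s0 where
    "\<And>x. Q x u = - \<beta> * sigmoid (\<beta>0 - x) + p x * r + \<gamma> * noise_mixture p s1 s0 x"
    "\<And>x. 0 \<le> p x" "\<And>x. p x \<le> 1" "\<And>x y. \<bar>p x - p y\<bar> \<le> \<bar>x - y\<bar> / 4"
    "0 \<le> r" "r \<le> \<rho>bar" "\<bar>s1\<bar> \<le> bbar + cbar" "\<bar>s0\<bar> \<le> bbar + cbar"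
proof -
  obtain i where i: "i < M" "u i \<in> {0, 1}" "\<And>j. j \<noteq> i \<Longrightarrow> u j = 0"
    using actions_single_support[OF assms M_pos] by blast
  let ?p = "\<lambda>x. u i * sigmoid (x + \<mu> i)"
  have "\<bar>?p x - ?p y\<bar> \<le> \<bar>x - y\<bar> / 4" for x y
    using i(2) sigmoid_lipschitz[of "x + \<mu> i" "y + \<mu> i"] by auto
  moreover have "0 \<le> ?p x" "?p x \<le> 1" for x
    using i(2) sigmoid_pos[of "x + \<mu> i"] sigmoid_less_1[of "x + \<mu> i"] by auto
  moreover have "\<bar>b i * u i + c i\<bar> \<le> bbar + cbar" "\<bar>b i * u i\<bar> \<le> bbar + cbar"
    using i(1,2) b_bound[of i] c_bound[of i] cbar_nonneg by (auto simp: abs_le_iff)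
  moreover have "Q x u = - \<beta> * sigmoid (\<beta>0 - x) + ?p x * \<rho> i
                   + \<gamma> * noise_mixture ?p (b i * u i + c i) (b i * u i) x" for x
    using q_value_single_support[of i M u, OF i(1) i(3) i(2)]
    by (simp add: noise_mixture_def add.assoc)
  ultimately show thesis
    using rho_bounds[OF i(1)] by (intro that[of ?p "\<rho> i" "b i * u i + c i" "b i * u i"]) auto
qed

lemma abs_noise_mixture_le:
  assumes "x \<in> {-C..C}" "0 \<le> p x" "p x \<le> 1" "\<bar>s1\<bar> \<le> bbar + cbar" "\<bar>s0\<bar> \<le> bbar + cbar"
  shows "\<bar>noise_mixture p s1 s0 x\<bar> \<le> sup_norm"
  unfolding noise_mixture_def using assms by (intro abs_convex_comb_le abs_noise_average_le)

lemma abs_q_value_le: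
  assumes "x \<in> {-C..C}" "u \<in> actions M"
  shows "\<bar>Q x u\<bar> \<le> \<beta> + \<rho>bar + \<gamma> * sup_norm"
proof -
  obtain p r s1 s0 where Q: "\<And>x. Q x u = - \<beta> * sigmoid (\<beta>0 - x) + p x * r + \<gamma> * noise_mixture p s1 s0 x"
    and p: "\<And>x. 0 \<le> p x" "\<And>x. p x \<le> 1" "\<And>x y. \<bar>p x - p y\<bar> \<le> \<bar>x - y\<bar> / 4"
    and r: "0 \<le> r" "r \<le> \<rho>bar" and s: "\<bar>s1\<bar> \<le> bbar + cbar" "\<bar>s0\<bar> \<le> bbar + cbar"
    by (elim q_value_decomposition[OF assms(2)])
  have "\<beta> * sigmoid (\<beta>0 - x) \<le> \<beta> * 1"
    using beta_nonneg sigmoid_less_1[of "\<beta>0 - x"] by (intro mult_left_mono) auto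
  moreover have "0 \<le> \<beta> * sigmoid (\<beta>0 - x)"
    using beta_nonneg sigmoid_pos[of "\<beta>0 - x"] by simp
  moreover have "p x * r \<le> \<rho>bar"
    using mult_left_le_one_le[OF r(1) p(1)[of x] p(2)[of x]] r(2) by linarith
  moreover have "0 \<le> p x * r"
    using p(1) r(1) by simp
  moreover have "\<bar>\<gamma> * noise_mixture p s1 s0 x\<bar> \<le> \<gamma> * sup_norm"
    using gamma_nonneg abs_noise_mixture_le[OF assms(1) p(1,2) s]
    by (simp add: abs_mult mult_left_mono)
  ultimately show ?thesis
    unfolding Q by (simp add: abs_le_iff)
qed

lemma abs_J_le:
  assumes "x \<in> {-C..C}"
  shows "\<bar>J x\<bar> \<le> \<beta> + \<rho>bar + \<gamma> * sup_norm"
  unfolding J_fixpoint[OF assms] bellman_eq_Max_q_value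
  using assms by (intro abs_Max_image_le finite_actions abs_q_value_le) (auto intro: zero_in_actions)

lemma sup_norm_le: "sup_norm \<le> (\<beta> + \<rho>bar) / (1 - \<gamma>)"
proof -
  have "sup_norm \<le> \<beta> + \<rho>bar + \<gamma> * sup_norm"
    unfolding sup_norm_def using C_nonneg
    by (intro cSUP_least) (auto simp: abs_J_le[unfolded sup_norm_def])
  then show ?thesis
    using gamma_less_1 by (simp add: field_simps)
qed

lemma noise_average_diff_le_lipschitz_up_to:
  assumes E: "lipschitz_up_to E" and x: "x \<in> {-C..C}" and y: "y \<in> {-C..C}"
    and s: "\<bar>s\<bar> \<le> bbar + cbar"
  shows "\<bar>noise_average g J (a * x + s) - noise_average g J (a * y + s)\<bar>
           \<le> lipschitz_const * (a * \<bar>x - y\<bar>) + E"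
proof (rule noise_average_diff_le[OF x y s])
  fix w assume "\<bar>w\<bar> \<le> wbar"
  then have "a * x + s + w \<in> {-C..C}" "a * y + s + w \<in> {-C..C}"
    using successor_in_states x y s by auto
  then have "\<bar>J (a * x + s + w) - J (a * y + s + w)\<bar>
               \<le> lipschitz_const * \<bar>(a * x + s + w) - (a * y + s + w)\<bar> + E"
    using E unfolding lipschitz_up_to_def by blast
  also have "\<bar>(a * x + s + w) - (a * y + s + w)\<bar> = a * \<bar>x - y\<bar>"
    using a_nonneg by (simp add: abs_mult flip: right_diff_distrib)
  finally show "\<bar>J (a * x + s + w) - J (a * y + s + w)\<bar> \<le> lipschitz_const * (a * \<bar>x - y\<bar>) + E" .
qed

lemma noise_mixture_diff_le:
  assumes E: "lipschitz_up_to E" and x: "x \<in> {-C..C}" and y: "y \<in> {-C..C}"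
    and p: "0 \<le> p x" "p x \<le> 1" "\<bar>p x - p y\<bar> \<le> \<bar>x - y\<bar> / 4"
    and s: "\<bar>s1\<bar> \<le> bbar + cbar" "\<bar>s0\<bar> \<le> bbar + cbar"
  shows "\<bar>noise_mixture p s1 s0 x - noise_mixture p s1 s0 y\<bar>
           \<le> lipschitz_const * (a * \<bar>x - y\<bar>) + E + \<bar>x - y\<bar> / 4 * (2 * sup_norm)"
proof -
  have "\<bar>noise_average g J (a * y + s1) - noise_average g J (a * y + s0)\<bar> \<le> 2 * sup_norm"
    using abs_noise_average_le[OF y s(1)] abs_noise_average_le[OF y s(2)] by linarith
  then have "\<bar>p x - p y\<bar> * \<bar>noise_average g J (a * y + s1) - noise_average g J (a * y + s0)\<bar>
               \<le> \<bar>x - y\<bar> / 4 * (2 * sup_norm)"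
    using p(3) by (intro mult_mono) auto
  then show ?thesis
    unfolding noise_mixture_def
    using convex_comb_diff_le[OF p(1,2) noise_average_diff_le_lipschitz_up_to[OF E x y s(1)]
        noise_average_diff_le_lipschitz_up_to[OF E x y s(2)], of "p y"]
    by linarith
qed

lemma q_value_diff_le:
  assumes E: "lipschitz_up_to E" and x: "x \<in> {-C..C}" and y: "y \<in> {-C..C}"
    and u: "u \<in> actions M"
  shows "\<bar>Q x u - Q y u\<bar>
           \<le> \<bar>x - y\<bar> * ((\<beta> + \<rho>bar) / 4 + \<gamma> * a * lipschitz_const + \<gamma> * sup_norm / 2) + \<gamma> * E"
proof -
  obtain p r s1 s0 where Q: "\<And>x. Q x u = - \<beta> * sigmoid (\<beta>0 - x) + p x * r + \<gamma> * noise_mixture p s1 s0 x"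
    and p: "\<And>x. 0 \<le> p x" "\<And>x. p x \<le> 1" "\<And>x y. \<bar>p x - p y\<bar> \<le> \<bar>x - y\<bar> / 4"
    and r: "0 \<le> r" "r \<le> \<rho>bar" and s: "\<bar>s1\<bar> \<le> bbar + cbar" "\<bar>s0\<bar> \<le> bbar + cbar"
    by (elim q_value_decomposition[OF u])
  let ?\<delta> = "\<bar>x - y\<bar>"
  have "\<bar>\<beta> * sigmoid (\<beta>0 - y) - \<beta> * sigmoid (\<beta>0 - x)\<bar> \<le> \<beta> * (?\<delta> / 4)"
    using abs_scaled_sigmoid_diff_le[OF beta_nonneg, of "\<beta>0 - y" "\<beta>0 - x"] by simp
  moreover have "\<bar>p x * r - p y * r\<bar> \<le> ?\<delta> / 4 * \<rho>bar"
    unfolding left_diff_distrib[symmetric] abs_mult using p(3)[of x y] r by (intro mult_mono) auto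
  moreover have "\<bar>\<gamma> * noise_mixture p s1 s0 x - \<gamma> * noise_mixture p s1 s0 y\<bar>
                   \<le> \<gamma> * (lipschitz_const * (a * ?\<delta>) + E + ?\<delta> / 4 * (2 * sup_norm))"
    unfolding right_diff_distrib[symmetric] abs_mult
    using gamma_nonneg noise_mixture_diff_le[OF E x y p(1,2,3) s] by (simp add: mult_left_mono)
  moreover have "Q x u - Q y u = (\<beta> * sigmoid (\<beta>0 - y) - \<beta> * sigmoid (\<beta>0 - x)) + (p x * r - p y * r)
                   + (\<gamma> * noise_mixture p s1 s0 x - \<gamma> * noise_mixture p s1 s0 y)"
    unfolding Q by (simp add: algebra_simps)
  ultimately have "\<bar>Q x u - Q y u\<bar> \<le> \<beta> * (?\<delta> / 4) + ?\<delta> / 4 * \<rho>bar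
                     + \<gamma> * (lipschitz_const * (a * ?\<delta>) + E + ?\<delta> / 4 * (2 * sup_norm))"
    by (simp only: abs_le_iff) linarith
  also have "\<dots> = ?\<delta> * ((\<beta> + \<rho>bar) / 4 + \<gamma> * a * lipschitz_const + \<gamma> * sup_norm / 2) + \<gamma> * E"
    by (simp add: algebra_simps)
  finally show ?thesis .
qed

lemma gamma_abar_less_1: "\<gamma> * abar < 1"
  using mult_left_le_one_le[of abar \<gamma>] gamma_nonneg gamma_less_1 a_nonneg a_le_abar abar_less_1
  by linarith

lemma lipschitz_const_eq:
  "(\<beta> + \<rho>bar) / 4 + \<gamma> * abar * lipschitz_const + \<gamma> * ((\<beta> + \<rho>bar) / (1 - \<gamma>)) / 2
     = lipschitz_const"
proof -
  have "1 - \<gamma> * abar \<noteq> 0" "1 - \<gamma> \<noteq> 0"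
    using gamma_abar_less_1 gamma_less_1 by auto
  have cancel: "K / (4 * d) * m * d = K / 4 * m" if "d \<noteq> 0" for K d m :: real
    using that by (simp add: field_simps)
  have "lipschitz_const * (1 - \<gamma> * abar) = (\<beta> + \<rho>bar) / 4 * (1 + 2 * \<gamma> / (1 - \<gamma>))"
    unfolding lipschitz_const_def by (rule cancel) fact
  also have "\<dots> = (\<beta> + \<rho>bar) / 4 + \<gamma> * ((\<beta> + \<rho>bar) / (1 - \<gamma>)) / 2"
    using \<open>1 - \<gamma> \<noteq> 0\<close> by (simp add: field_simps)
  finally show ?thesis
    by (simp add: algebra_simps)
qed

lemma lipschitz_const_nonneg: "0 \<le> lipschitz_const"
  unfolding lipschitz_const_def
  using beta_nonneg rhobar_nonneg gamma_nonneg gamma_less_1 gamma_abar_less_1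
  by (intro mult_nonneg_nonneg divide_nonneg_pos add_nonneg_nonneg) auto

lemma lipschitz_up_to_initial: "lipschitz_up_to (2 * sup_norm)"
  unfolding lipschitz_up_to_def
proof (intro ballI)
  fix x y assume x: "x \<in> {-C..C}" and y: "y \<in> {-C..C}"
  have "\<bar>J x - J y\<bar> \<le> 2 * sup_norm"
    using abs_J_le_sup_norm[OF x] abs_J_le_sup_norm[OF y] abs_triangle_ineq4[of "J x" "J y"]
    by linarith
  moreover have "0 \<le> lipschitz_const * \<bar>x - y\<bar>"
    using lipschitz_const_nonneg by simp
  ultimately show "\<bar>J x - J y\<bar> \<le> lipschitz_const * \<bar>x - y\<bar> + 2 * sup_norm"
    by linarith
qed

lemma lipschitz_up_to_contract:
  assumes "lipschitz_up_to E"
  shows "lipschitz_up_to (\<gamma> * E)"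
  unfolding lipschitz_up_to_def
proof (intro ballI)
  fix x y assume x: "x \<in> {-C..C}" and y: "y \<in> {-C..C}"
  have "\<bar>J x - J y\<bar>
          \<le> \<bar>x - y\<bar> * ((\<beta> + \<rho>bar) / 4 + \<gamma> * a * lipschitz_const + \<gamma> * sup_norm / 2) + \<gamma> * E"
    unfolding J_fixpoint[OF x] J_fixpoint[OF y] bellman_eq_Max_q_value
    using assms x y
    by (intro abs_Max_image_diff_le finite_actions q_value_diff_le) (auto intro: zero_in_actions)
  also have "(\<beta> + \<rho>bar) / 4 + \<gamma> * a * lipschitz_const + \<gamma> * sup_norm / 2 \<le> lipschitz_const"
  proof -
    have "\<gamma> * a * lipschitz_const \<le> \<gamma> * abar * lipschitz_const"
      using gamma_nonneg a_le_abar lipschitz_const_nonneg by (intro mult_right_mono mult_left_mono) auto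
    moreover have "\<gamma> * sup_norm / 2 \<le> \<gamma> * ((\<beta> + \<rho>bar) / (1 - \<gamma>)) / 2"
      by (rule divide_right_mono[OF mult_left_mono[OF sup_norm_le gamma_nonneg]]) simp
    ultimately show ?thesis
      using lipschitz_const_eq by linarith
  qed
  then have "\<bar>x - y\<bar> * ((\<beta> + \<rho>bar) / 4 + \<gamma> * a * lipschitz_const + \<gamma> * sup_norm / 2) + \<gamma> * E
               \<le> \<bar>x - y\<bar> * lipschitz_const + \<gamma> * E"
    by (simp add: mult_left_mono)
  finally show "\<bar>J x - J y\<bar> \<le> lipschitz_const * \<bar>x - y\<bar> + \<gamma> * E"
    by (simp add: mult.commute)
qed

theorem lipschitz_on_states: "lipschitz_const-lipschitz_on {-C..C} J"
proof (rule lipschitz_onI[OF _ lipschitz_const_nonneg])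
  fix x y assume x: "x \<in> {-C..C}" and y: "y \<in> {-C..C}"
  have "lipschitz_up_to (\<gamma> ^ n * (2 * sup_norm))" for n
    by (induction n) (simp_all add: lipschitz_up_to_initial lipschitz_up_to_contract mult.assoc)
  then have "\<bar>J x - J y\<bar> \<le> lipschitz_const * \<bar>x - y\<bar> + \<gamma> ^ n * (2 * sup_norm)" for n
    using x y unfolding lipschitz_up_to_def by blast
  moreover have "(\<lambda>n. lipschitz_const * \<bar>x - y\<bar> + \<gamma> ^ n * (2 * sup_norm))
                   \<longlonglongrightarrow> lipschitz_const * \<bar>x - y\<bar> + 0 * (2 * sup_norm)"
    using gamma_nonneg gamma_less_1 by (intro tendsto_intros LIMSEQ_power_zero) auto
  ultimately have "\<bar>J x - J y\<bar> \<le> lipschitz_const * \<bar>x - y\<bar>"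
    using LIMSEQ_le_const by force
  then show "dist (J x) (J y) \<le> lipschitz_const * dist x y"
    by (simp add: dist_real_def)
qed

end

theorem mainTheorem15:
  fixes M :: nat and a abar bbar cbar wbar \<mu>bar \<rho>bar \<sigma>s \<beta> \<beta>0 \<gamma> :: real
    and b c \<mu> \<rho> :: "nat \<Rightarrow> real" and g :: "real \<Rightarrow> real" and J :: "real \<Rightarrow> real"
  assumes M_pos: "0 < M"
    and abar: "0 < abar" "abar < 1" and a: "0 \<le> a" "a \<le> abar"
    and b: "\<forall>i<M. \<bar>b i\<bar> \<le> bbar"
    and c: "\<forall>i<M. \<bar>c i\<bar> \<le> cbar"
    and mu: "\<forall>i<M. \<bar>\<mu> i\<bar> \<le> \<mu>bar"
    and rho: "\<forall>i<M. 0 \<le> \<rho> i \<and> \<rho> i \<le> \<rho>bar"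
    and beta: "0 \<le> \<beta>"
    and gamma: "0 < \<gamma>" "\<gamma> < 1"
    and wbar: "0 < wbar"
    and g_meas: "g \<in> borel_measurable borel"
    and g_nonneg: "\<forall>w. 0 \<le> g w"
    and g_prob: "has_bochner_integral lborel g 1"
    and g_sym: "\<forall>w. g (- w) = g w"
    and g_bdd: "\<forall>w. wbar < \<bar>w\<bar> \<longrightarrow> g w = 0"
    and g_logconc: "log_concave g"
    and g_subgauss: "\<forall>l. (LINT w|lborel. g w * exp (l * w)) \<le> exp (l\<^sup>2 * \<sigma>s\<^sup>2 / 2)"
    and J_meas: "J \<in> borel_measurable borel"
    and J_bdd: "bounded (J ` {-((bbar + cbar + wbar) / (1 - abar)) .. (bbar + cbar + wbar) / (1 - abar)})"
    and J_fix: "\<forall>x \<in> {-((bbar + cbar + wbar) / (1 - abar)) .. (bbar + cbar + wbar) / (1 - abar)}.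
                  J x = bellman M a b c \<mu> g \<beta> \<beta>0 \<rho> \<gamma> J x"
  shows "((\<beta> + \<rho>bar) / (4 * (1 - \<gamma> * abar)) * (1 + 2 * \<gamma> / (1 - \<gamma>)))-lipschitz_on
           {-((bbar + cbar + wbar) / (1 - abar)) .. (bbar + cbar + wbar) / (1 - abar)} J"
proof -
  define C where "C = (bbar + cbar + wbar) / (1 - abar)"
  have "abar * C + bbar + cbar + wbar \<le> C"
    using abar(2) by (simp add: C_def field_simps)
  then interpret bounded_bellman_fixpoint M a abar bbar cbar wbar \<rho>bar \<beta> \<beta>0 \<gamma> C b c \<mu> \<rho> g J
    using assms by unfold_locales (auto simp: C_def)
  show ?thesis
    using lipschitz_on_states unfolding lipschitz_const_def C_def .
qed

end
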